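(* Fix a task $(\mathcal{S},\mathcal{A},\_,d_0,\mathcal{R},\gamma)$. Let $\Pi$ be one of: (i) the set of all stationary policies; (ii) for some $\varepsilon>0$ and some transition model $\mathcal{T}_0$, the set of $\varepsilon$-suboptimal stationary policies $\{\pi: J_{\mathcal{T}_0}(\pi)\ge\sup_{\pi'}J_{\mathcal{T}_0}(\pi')-\varepsilon\}$; (iii) for some $\delta<1$, the set of $\delta$-deterministic stationary policies $\{\pi:\max_a\pi(a\mid s)\ge\delta\ \text{for every } s\in\mathcal{S}\}$. Then every pair of transition models $(\mathcal{T},\mathcal{T}')$ with $J_{\mathcal{T}},J_{\mathcal{T}'}$ both non-trivial on $\Pi$ and not equivalent on $\Pi$ is exploitable relative to $\Pi$ and this task.
   Context: Setting: finite $\mathcal{S}$, finite $\mathcal{A}$ with $|\mathcal{A}|>1$, $d_0\in\Delta(\mathcal{S})$, $\mathcal{R}:\mathcal{S}\times\mathcal{A}\to\mathbb{R}$, $\gamma\in[0,1)$; transition models $\mathcal{T}:\mathcal{S}\times\mathcal{A}\to\Delta(\mathcal{S})$; all states reachable. A task is an MDP without its transition model. Stationary policies $\pi:\mathcal{S}\to\Delta(\mathcal{A})$. $J_{\mathcal{T}}(\pi)=\mathbb{E}\big[\sum_{t\ge0}\gamma^t\mathcal{R}(s_t,a_t)\big]$ with $s_0\sim d_0$, $a_t\sim\pi(\cdot\mid s_t)$, $s_{t+1}\sim\mathcal{T}(\cdot\mid s_t,a_t)$; the supremum is over stationary policies. $J$ is trivial on $\Pi$ if constant on $\Pi$; $J_1,J_2$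 equivalent on $\Pi$ if for all $\pi,\pi'\in\Pi$, $J_1(\pi)\ge J_1(\pi')\iff J_2(\pi)\ge J_2(\pi')$. $(\mathcal{T},\mathcal{T}')$ is exploitable relative to $\Pi$ if there are $\pi,\pi'\in\Pi$ with $J_{\mathcal{T}}(\pi)>J_{\mathcal{T}}(\pi')$ and $J_{\mathcal{T}'}(\pi')>J_{\mathcal{T}'}(\pi)$. *)

theory Defs
  imports "HOL-Analysis.Analysis"
begin

definition is_dist :: "('x::finite \<Rightarrow> real) \<Rightarrow> bool" where
  "is_dist p \<longleftrightarrow> (\<forall>x. 0 \<le> p x) \<and> (\<Sum>x\<in>UNIV. p x) = 1"

definition is_policy :: "('s::finite \<Rightarrow> 'a::finite \<Rightarrow> real) \<Rightarrow> bool" where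
  "is_policy p \<longleftrightarrow> (\<forall>s. is_dist (p s))"

definition policies :: "('s::finite \<Rightarrow> 'a::finite \<Rightarrow> real) set" where
  "policies = {p. is_policy p}"

definition is_transition :: "('s::finite \<Rightarrow> 'a::finite \<Rightarrow> 's \<Rightarrow> real) \<Rightarrow> bool" where
  "is_transition T \<longleftrightarrow> (\<forall>s a. is_dist (T s a))"

fun state_dist :: "('s::finite \<Rightarrow> real) \<Rightarrow> ('s \<Rightarrow> 'a::finite \<Rightarrow> 's \<Rightarrow> real)
     \<Rightarrow> ('s \<Rightarrow> 'a \<Rightarrow> real) \<Rightarrow> nat \<Rightarrow> 's \<Rightarrow> real" where
  "state_dist d0 T p 0 = d0"
| "state_dist d0 T p (Suc t) =
     (\<lambda>s'. \<Sum>s\<in>UNIV. \<Sum>a\<in>UNIV. state_dist d0 T p t s * p s a * T s a s')"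

definition J :: "('s::finite \<Rightarrow> real) \<Rightarrow> ('s \<Rightarrow> 'a::finite \<Rightarrow> real) \<Rightarrow> real
     \<Rightarrow> ('s \<Rightarrow> 'a \<Rightarrow> 's \<Rightarrow> real) \<Rightarrow> ('s \<Rightarrow> 'a \<Rightarrow> real) \<Rightarrow> real" where
  "J d0 R \<gamma> T p = (\<Sum>t. \<gamma> ^ t * (\<Sum>s\<in>UNIV. \<Sum>a\<in>UNIV. state_dist d0 T p t s * p s a * R s a))"

definition all_reachable :: "('s::finite \<Rightarrow> real) \<Rightarrow> ('s \<Rightarrow> 'a::finite \<Rightarrow> 's \<Rightarrow> real) \<Rightarrow> bool" where
  "all_reachable d0 T \<longleftrightarrow>
     (\<forall>s. \<exists>p t. is_policy p \<and> state_dist d0 T p t s > 0)"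

definition trivial_on :: "('p \<Rightarrow> real) \<Rightarrow> 'p set \<Rightarrow> bool" where
  "trivial_on f P \<longleftrightarrow> (\<forall>x\<in>P. \<forall>y\<in>P. f x = f y)"

definition equivalent_on :: "('p \<Rightarrow> real) \<Rightarrow> ('p \<Rightarrow> real) \<Rightarrow> 'p set \<Rightarrow> bool" where
  "equivalent_on f g P \<longleftrightarrow> (\<forall>x\<in>P. \<forall>y\<in>P. f x \<ge> f y \<longleftrightarrow> g x \<ge> g y)"

definition exploitable :: "('s::finite \<Rightarrow> real) \<Rightarrow> ('s \<Rightarrow> 'a::finite \<Rightarrow> real) \<Rightarrow> real
     \<Rightarrow> ('s \<Rightarrow> 'a \<Rightarrow> 's \<Rightarrow> real) \<Rightarrow> ('s \<Rightarrow> 'a \<Rightarrow> 's \<Rightarrow> real)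
     \<Rightarrow> ('s \<Rightarrow> 'a \<Rightarrow> real) set \<Rightarrow> bool" where
  "exploitable d0 R \<gamma> T T' P \<longleftrightarrow>
     (\<exists>p\<in>P. \<exists>q\<in>P. J d0 R \<gamma> T p > J d0 R \<gamma> T q \<and> J d0 R \<gamma> T' q > J d0 R \<gamma> T' p)"

definition eps_suboptimal :: "('s::finite \<Rightarrow> real) \<Rightarrow> ('s \<Rightarrow> 'a::finite \<Rightarrow> real) \<Rightarrow> real
     \<Rightarrow> ('s \<Rightarrow> 'a \<Rightarrow> 's \<Rightarrow> real) \<Rightarrow> real \<Rightarrow> ('s \<Rightarrow> 'a \<Rightarrow> real) set" where
  "eps_suboptimal d0 R \<gamma> T0 \<epsilon> =
     {p \<in> policies. J d0 R \<gamma> T0 p \<ge> (SUP q\<in>policies. J d0 R \<gamma> T0 q) - \<epsilon>}"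

definition delta_deterministic :: "real \<Rightarrow> ('s::finite \<Rightarrow> 'a::finite \<Rightarrow> real) set" where
  "delta_deterministic \<delta> = {p \<in> policies. \<forall>s. (MAX a. p s a) \<ge> \<delta>}"

end

theory Submission
  imports Defs
begin

(*
  The argument only uses two regularity properties of the policy evaluation J_T.
  It is Lipschitz in the policy, and along a segment that moves the policy in a
  single state it is a linear fractional function (alpha + beta t) / (1 + delta t)
  of the mixing parameter t, since such a move is a rank-one perturbation of the
  Bellman flow equation. Each of the three policy sets contains a ball of policies.

  If (T, T') is not exploitable, J_T' weakly follows the order of J_T on that set.
  On a segment in the ball on which J_T moves, the two linear fractional functions
  are then tied by a relation (c J_T + d) J_T' = a J_T + b with ad - bc >= 0. By
  continuity the relation holds on a neighbourhood of the segment's midpoint, and,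
  being quadratic in t after clearing denominators along every segment, on all
  policies. If ad - bc > 0, J_T' is an increasing function of J_T, so the two are
  equivalent; if ad - bc = 0, J_T' is constant.
*)

lemma policy_nonneg: "is_policy p \<Longrightarrow> 0 \<le> p s a"
  unfolding is_policy_def is_dist_def by auto

lemma policy_sum: "is_policy p \<Longrightarrow> (\<Sum>a\<in>UNIV. p s a) = 1"
  unfolding is_policy_def is_dist_def by auto

lemma policy_le_1: "is_policy p \<Longrightarrow> p s a \<le> 1"
  using member_le_sum[of a UNIV "p s"] policy_nonneg policy_sum by fastforce

lemma is_policy_row: "is_policy p \<Longrightarrow> is_dist (p s)"
  unfolding is_policy_def by auto

lemma is_policy_fun_upd: "is_policy p \<Longrightarrow> is_dist e \<Longrightarrow> is_policy (p(s := e))"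
  unfolding is_policy_def by auto

lemma is_dist_convex:
  "is_dist e \<Longrightarrow> is_dist e' \<Longrightarrow> 0 \<le> t \<Longrightarrow> t \<le> 1 \<Longrightarrow> is_dist (\<lambda>x. (1 - t) * e x + t * e' x)"
  unfolding is_dist_def by (auto simp: sum.distrib simp flip: sum_distrib_left)

lemma is_policy_deterministic: "is_policy (\<lambda>(s::'s::finite) (a::'a::finite). if a = a0 then 1 else 0)"
  unfolding is_policy_def is_dist_def by simp

lemma transition_nonneg: "is_transition T \<Longrightarrow> 0 \<le> T s a s'"
  unfolding is_transition_def is_dist_def by auto

lemma transition_sum: "is_transition T \<Longrightarrow> (\<Sum>s'\<in>UNIV. T s a s') = 1"
  unfolding is_transition_def is_dist_def by auto

section \<open>Occupancy measures\<close>

lemma transition_l1_le: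
  assumes "is_transition T"
  shows "(\<Sum>s'\<in>UNIV. \<bar>\<Sum>s\<in>UNIV. \<Sum>a\<in>UNIV. y s a * T s a s'\<bar>) \<le> (\<Sum>s\<in>UNIV. \<Sum>a\<in>UNIV. \<bar>y s a\<bar>)"
proof -
  have "(\<Sum>s'\<in>UNIV. \<bar>\<Sum>s\<in>UNIV. \<Sum>a\<in>UNIV. y s a * T s a s'\<bar>)
      \<le> (\<Sum>s'\<in>UNIV. \<Sum>s\<in>UNIV. \<Sum>a\<in>UNIV. \<bar>y s a\<bar> * T s a s')"
    using transition_nonneg[OF assms]
    by (intro sum_mono order_trans[OF sum_abs]) (simp add: order_trans[OF sum_abs] abs_mult)
  also have "\<dots> = (\<Sum>s\<in>UNIV. \<Sum>a\<in>UNIV. \<bar>y s a\<bar> * (\<Sum>s'\<in>UNIV. T s a s'))"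
    by (subst sum.swap, subst sum.swap) (simp add: sum_distrib_left)
  finally show ?thesis
    by (simp add: transition_sum[OF assms])
qed

lemma policy_transition_l1_le:
  assumes "is_transition T" "is_policy p"
  shows "(\<Sum>s'\<in>UNIV. \<bar>\<Sum>s\<in>UNIV. \<Sum>a\<in>UNIV. x s * p s a * T s a s'\<bar>) \<le> (\<Sum>s\<in>UNIV. \<bar>x s\<bar>)"
proof -
  have "(\<Sum>s\<in>UNIV. \<Sum>a\<in>UNIV. \<bar>x s * p s a\<bar>) = (\<Sum>s\<in>UNIV. \<bar>x s\<bar>)"
    using policy_nonneg[OF assms(2)] policy_sum[OF assms(2)]
    by (simp add: abs_mult flip: sum_distrib_left)
  then show ?thesis
    using transition_l1_le[OF assms(1), of "\<lambda>s a. x s * p s a"] by simp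
qed

lemma state_dist_l1_le:
  assumes "is_transition T" "is_policy p"
  shows "(\<Sum>s\<in>UNIV. \<bar>state_dist \<mu> T p t s\<bar>) \<le> (\<Sum>s\<in>UNIV. \<bar>\<mu> s\<bar>)"
  by (induction t) (auto intro: order_trans[OF policy_transition_l1_le[OF assms]])

definition occupancy :: "('s::finite \<Rightarrow> real) \<Rightarrow> ('s \<Rightarrow> 'a::finite \<Rightarrow> 's \<Rightarrow> real)
     \<Rightarrow> ('s \<Rightarrow> 'a \<Rightarrow> real) \<Rightarrow> real \<Rightarrow> 's \<Rightarrow> real" where
  "occupancy \<mu> T p \<gamma> s = (\<Sum>t. \<gamma> ^ t * state_dist \<mu> T p t s)"

context
  fixes T :: "'s::finite \<Rightarrow> 'a::finite \<Rightarrow> 's \<Rightarrow> real" and p :: "'s \<Rightarrow> 'a \<Rightarrow> real" and \<gamma> :: real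
  assumes T: "is_transition T" and p: "is_policy p" and \<gamma>: "0 \<le> \<gamma>" "\<gamma> < 1"
begin

lemma summable_occupancy: "summable (\<lambda>t. \<gamma> ^ t * state_dist \<mu> T p t s)"
proof (rule summable_comparison_test')
  show "summable (\<lambda>t. \<gamma> ^ t * (\<Sum>s\<in>UNIV. \<bar>\<mu> s\<bar>))"
    using \<gamma> by (intro summable_mult2 summable_geometric) auto
  have "\<bar>state_dist \<mu> T p t s\<bar> \<le> (\<Sum>s\<in>UNIV. \<bar>\<mu> s\<bar>)" for t
    by (rule order_trans[OF member_le_sum state_dist_l1_le[OF T p]]) auto
  then show "norm (\<gamma> ^ t * state_dist \<mu> T p t s) \<le> \<gamma> ^ t * (\<Sum>s\<in>UNIV. \<bar>\<mu> s\<bar>)" for t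
    using \<gamma> by (simp add: abs_mult mult_left_mono)
qed

lemma occupancy_bellman:
  "occupancy \<mu> T p \<gamma> s' = \<mu> s' + \<gamma> * (\<Sum>s\<in>UNIV. \<Sum>a\<in>UNIV. occupancy \<mu> T p \<gamma> s * p s a * T s a s')"
proof -
  have sums: "summable (\<lambda>t. \<gamma> ^ t * state_dist \<mu> T p t s * c)" for s c
    by (intro summable_mult2 summable_occupancy)
  have "(\<Sum>t. \<gamma> ^ Suc t * state_dist \<mu> T p (Suc t) s')
      = (\<Sum>t. \<gamma> * (\<Sum>s\<in>UNIV. \<Sum>a\<in>UNIV. \<gamma> ^ t * state_dist \<mu> T p t s * (p s a * T s a s')))"
    by (simp add: sum_distrib_left mult_ac)
  also have "\<dots> = \<gamma> * (\<Sum>s\<in>UNIV. \<Sum>a\<in>UNIV. \<Sum>t. \<gamma> ^ t * state_dist \<mu> T p t s * (p s a * T s a s'))"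
    by (simp add: suminf_mult summable_sum sums suminf_sum)
  also have "\<dots> = \<gamma> * (\<Sum>s\<in>UNIV. \<Sum>a\<in>UNIV. occupancy \<mu> T p \<gamma> s * (p s a * T s a s'))"
    unfolding occupancy_def by (simp only: suminf_mult2[OF summable_occupancy, symmetric])
  finally show ?thesis
    using suminf_split_head[OF summable_occupancy, of \<mu> s'] unfolding occupancy_def
    by (simp add: mult.assoc)
qed

lemma J_eq_occupancy: "J \<mu> R \<gamma> T p = (\<Sum>s\<in>UNIV. \<Sum>a\<in>UNIV. occupancy \<mu> T p \<gamma> s * p s a * R s a)"
proof -
  have sums: "summable (\<lambda>t. \<gamma> ^ t * state_dist \<mu> T p t s * c)" for s c
    by (intro summable_mult2 summable_occupancy)
  have "J \<mu> R \<gamma> T p = (\<Sum>t. \<Sum>s\<in>UNIV. \<Sum>a\<in>UNIV. \<gamma> ^ t * state_dist \<mu> T p t s * (p s a * R s a))"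
    unfolding J_def by (simp add: sum_distrib_left mult_ac)
  also have "\<dots> = (\<Sum>s\<in>UNIV. \<Sum>a\<in>UNIV. \<Sum>t. \<gamma> ^ t * state_dist \<mu> T p t s * (p s a * R s a))"
    by (simp add: summable_sum sums suminf_sum)
  also have "\<dots> = (\<Sum>s\<in>UNIV. \<Sum>a\<in>UNIV. occupancy \<mu> T p \<gamma> s * (p s a * R s a))"
    unfolding occupancy_def by (simp only: suminf_mult2[OF summable_occupancy, symmetric])
  finally show ?thesis by (simp add: mult.assoc)
qed

lemma bellman_l1_le:
  assumes "\<And>s'. x s' = \<mu> s' + \<gamma> * (\<Sum>s\<in>UNIV. \<Sum>a\<in>UNIV. x s * p s a * T s a s')"
  shows "(1 - \<gamma>) * (\<Sum>s\<in>UNIV. \<bar>x s\<bar>) \<le> (\<Sum>s\<in>UNIV. \<bar>\<mu> s\<bar>)"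
proof -
  let ?Px = "\<lambda>s'. \<Sum>s\<in>UNIV. \<Sum>a\<in>UNIV. x s * p s a * T s a s'"
  have "\<bar>x s'\<bar> \<le> \<bar>\<mu> s'\<bar> + \<gamma> * \<bar>?Px s'\<bar>" for s'
    using \<gamma> abs_triangle_ineq[of "\<mu> s'" "\<gamma> * ?Px s'"] assms[of s'] by (simp add: abs_mult)
  then have "(\<Sum>s\<in>UNIV. \<bar>x s\<bar>) \<le> (\<Sum>s'\<in>UNIV. \<bar>\<mu> s'\<bar> + \<gamma> * \<bar>?Px s'\<bar>)"
    by (rule sum_mono)
  also have "\<dots> = (\<Sum>s\<in>UNIV. \<bar>\<mu> s\<bar>) + \<gamma> * (\<Sum>s'\<in>UNIV. \<bar>?Px s'\<bar>)"
    by (simp add: sum.distrib sum_distrib_left)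
  also have "\<dots> \<le> (\<Sum>s\<in>UNIV. \<bar>\<mu> s\<bar>) + \<gamma> * (\<Sum>s\<in>UNIV. \<bar>x s\<bar>)"
    using \<gamma> by (intro add_left_mono mult_left_mono policy_transition_l1_le T p) auto
  finally show ?thesis by (simp add: left_diff_distrib)
qed

lemma bellman_homogeneous_eq_0:
  assumes "\<And>s'. x s' = \<gamma> * (\<Sum>s\<in>UNIV. \<Sum>a\<in>UNIV. x s * p s a * T s a s')"
  shows "x s = 0"
proof -
  have "(1 - \<gamma>) * (\<Sum>s\<in>UNIV. \<bar>x s\<bar>) \<le> 0"
    using bellman_l1_le[of x "\<lambda>_. 0"] by (simp flip: assms)
  then have "(\<Sum>s\<in>UNIV. \<bar>x s\<bar>) \<le> 0"
    using \<gamma> by (simp add: mult_le_0_iff)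
  then have "(\<Sum>s\<in>UNIV. \<bar>x s\<bar>) = 0"
    by (simp add: antisym sum_nonneg)
  then show ?thesis by (simp add: sum_nonneg_eq_0_iff)
qed

lemma occupancy_l1_le: "(1 - \<gamma>) * (\<Sum>s\<in>UNIV. \<bar>occupancy \<mu> T p \<gamma> s\<bar>) \<le> (\<Sum>s\<in>UNIV. \<bar>\<mu> s\<bar>)"
  by (rule bellman_l1_le) (rule occupancy_bellman)

end

section \<open>Lipschitz continuity of policy evaluation\<close>

definition lipschitz_policies :: "(('s::finite \<Rightarrow> 'a::finite \<Rightarrow> real) \<Rightarrow> real) \<Rightarrow> bool" where
  "lipschitz_policies F \<longleftrightarrow> (\<exists>K\<ge>0. \<forall>p q h. is_policy p \<longrightarrow> is_policy q \<longrightarrow>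
      (\<forall>s a. \<bar>p s a - q s a\<bar> \<le> h) \<longrightarrow> \<bar>F p - F q\<bar> \<le> K * h)"

lemma lipschitz_policies_J:
  fixes \<mu> :: "'s::finite \<Rightarrow> real" and R :: "'s \<Rightarrow> 'a::finite \<Rightarrow> real"
  assumes T: "is_transition T" and \<gamma>: "0 \<le> \<gamma>" "\<gamma> < 1"
  shows "lipschitz_policies (J \<mu> R \<gamma> T)"
proof -
  define Rm where "Rm = (\<Sum>s\<in>UNIV. \<Sum>a\<in>UNIV. \<bar>R s a\<bar>)"
  define M where "M = (\<Sum>s\<in>UNIV. \<bar>\<mu> s\<bar>) / (1 - \<gamma>)"
  define C where "C = real CARD('a)"
  have Rm: "\<bar>R s a\<bar> \<le> Rm" for s a
    unfolding Rm_def using member_le_sum[of s UNIV "\<lambda>s. \<Sum>a\<in>UNIV. \<bar>R s a\<bar>"]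
      member_le_sum[of a UNIV "\<lambda>a. \<bar>R s a\<bar>"] by (fastforce intro: sum_nonneg)
  have "0 \<le> Rm * C * M / (1 - \<gamma>)"
    unfolding Rm_def C_def M_def using \<gamma> by (simp add: sum_nonneg)
  moreover have "\<bar>J \<mu> R \<gamma> T p - J \<mu> R \<gamma> T q\<bar> \<le> Rm * C * M / (1 - \<gamma>) * h"
    if p: "is_policy p" and q: "is_policy q" and h: "\<forall>s a. \<bar>p s a - q s a\<bar> \<le> h" for p q h
  proof -
    let ?op = "occupancy \<mu> T p \<gamma>" and ?oq = "occupancy \<mu> T q \<gamma>"
    define D where "D s = ?op s - ?oq s" for s
    define y where "y s a = ?oq s * (p s a - q s a)" for s a
    define \<nu> where "\<nu> s' = \<gamma> * (\<Sum>s\<in>UNIV. \<Sum>a\<in>UNIV. y s a * T s a s')" for s'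
    have "0 \<le> h" using h by (meson abs_ge_zero order_trans)
    have oq: "(\<Sum>s\<in>UNIV. \<bar>?oq s\<bar>) \<le> M"
      using occupancy_l1_le[OF T q \<gamma>, of \<mu>] \<gamma> unfolding M_def by (simp add: field_simps)
    have y: "(\<Sum>s\<in>UNIV. \<Sum>a\<in>UNIV. \<bar>y s a\<bar>) \<le> C * h * M"
    proof -
      have "\<bar>y s a\<bar> \<le> \<bar>?oq s\<bar> * h" for s a
        unfolding y_def by (simp add: abs_mult mult_left_mono h)
      then have "(\<Sum>s\<in>UNIV. \<Sum>a\<in>UNIV. \<bar>y s a\<bar>) \<le> (\<Sum>s\<in>UNIV. \<Sum>a\<in>(UNIV :: 'a set). \<bar>?oq s\<bar> * h)"
        by (meson sum_mono)
      also have "\<dots> = C * h * (\<Sum>s\<in>UNIV. \<bar>?oq s\<bar>)"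
        by (simp add: C_def sum_distrib_left mult_ac)
      finally show ?thesis
        using oq \<open>0 \<le> h\<close> by (smt (verit) C_def mult_left_mono of_nat_0_le_iff zero_le_mult_iff)
    qed
    have "D s' = \<nu> s' + \<gamma> * (\<Sum>s\<in>UNIV. \<Sum>a\<in>UNIV. D s * p s a * T s a s')" for s'
      using occupancy_bellman[OF T p \<gamma>, of \<mu> s'] occupancy_bellman[OF T q \<gamma>, of \<mu> s']
      unfolding D_def \<nu>_def y_def by (simp add: algebra_simps sum_subtractf sum.distrib)
    then have "(1 - \<gamma>) * (\<Sum>s\<in>UNIV. \<bar>D s\<bar>) \<le> (\<Sum>s\<in>UNIV. \<bar>\<nu> s\<bar>)"
      by (rule bellman_l1_le[OF T p \<gamma>])
    also have "\<dots> \<le> \<gamma> * (C * h * M)"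
      unfolding \<nu>_def using \<gamma> transition_l1_le[OF T, of y] y
      by (simp add: abs_mult flip: sum_distrib_left) (meson mult_left_mono order_trans)
    finally have D: "(\<Sum>s\<in>UNIV. \<bar>D s\<bar>) \<le> \<gamma> * (C * h * M) / (1 - \<gamma>)"
      using \<gamma> by (simp add: field_simps)
    have "J \<mu> R \<gamma> T p - J \<mu> R \<gamma> T q = (\<Sum>s\<in>UNIV. \<Sum>a\<in>UNIV. (D s * p s a + y s a) * R s a)"
      unfolding J_eq_occupancy[OF T p \<gamma>] J_eq_occupancy[OF T q \<gamma>] D_def y_def
      by (simp add: algebra_simps sum_subtractf sum.distrib)
    also have "\<bar>\<dots>\<bar> \<le> (\<Sum>s\<in>UNIV. \<Sum>a\<in>UNIV. (\<bar>D s\<bar> * p s a + \<bar>y s a\<bar>) * Rm)"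
      using policy_nonneg[OF p] Rm
      by (intro order_trans[OF sum_abs] sum_mono order_trans[OF sum_abs])
        (simp add: abs_mult mult_mono' abs_triangle_ineq[THEN order_trans])
    also have "\<dots> = Rm * ((\<Sum>s\<in>UNIV. \<bar>D s\<bar> * (\<Sum>a\<in>UNIV. p s a)) + (\<Sum>s\<in>UNIV. \<Sum>a\<in>UNIV. \<bar>y s a\<bar>))"
      by (simp add: sum.distrib sum_distrib_left sum_distrib_right distrib_left mult_ac)
    also have "\<dots> = Rm * ((\<Sum>s\<in>UNIV. \<bar>D s\<bar>) + (\<Sum>s\<in>UNIV. \<Sum>a\<in>UNIV. \<bar>y s a\<bar>))"
      by (simp add: policy_sum[OF p])
    also have "\<dots> \<le> Rm * (\<gamma> * (C * h * M) / (1 - \<gamma>) + C * h * M)"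
      using D y by (intro mult_left_mono add_mono) (auto simp: Rm_def sum_nonneg)
    also have "\<dots> = Rm * C * M / (1 - \<gamma>) * h"
      using \<gamma> by (simp add: field_simps)
    finally show ?thesis .
  qed
  ultimately show ?thesis
    unfolding lipschitz_policies_def by blast
qed

definition near :: "('s \<Rightarrow> 'a \<Rightarrow> real) \<Rightarrow> real \<Rightarrow> ('s \<Rightarrow> 'a \<Rightarrow> real) \<Rightarrow> bool" where
  "near m r q \<longleftrightarrow> (\<forall>s a. \<bar>q s a - m s a\<bar> < r)"

lemma lipschitz_policies_near:
  assumes "lipschitz_policies F" "is_policy m" "0 < \<epsilon>"
  obtains r where "0 < r" "\<And>q. is_policy q \<Longrightarrow> near m r q \<Longrightarrow> \<bar>F q - F m\<bar> < \<epsilon>"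
proof -
  obtain K where K: "0 \<le> K" "\<And>p q h. is_policy p \<Longrightarrow> is_policy q \<Longrightarrow>
      (\<forall>s a. \<bar>p s a - q s a\<bar> \<le> h) \<Longrightarrow> \<bar>F p - F q\<bar> \<le> K * h"
    using assms(1) unfolding lipschitz_policies_def by blast
  show ?thesis
  proof (rule that[of "\<epsilon> / (K + 1)"])
    show "0 < \<epsilon> / (K + 1)" using K assms by simp
    fix q assume q: "is_policy q" "near m (\<epsilon> / (K + 1)) q"
    have "\<bar>F q - F m\<bar> \<le> K * (\<epsilon> / (K + 1))"
      using q unfolding near_def by (intro K(2) assms(2)) (auto intro: less_imp_le)
    also have "\<dots> < \<epsilon>" using K assms by (simp add: field_simps)
    finally show "\<bar>F q - F m\<bar> < \<epsilon>" .
  qed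
qed

lemma lipschitz_policies_bdd_above:
  assumes "lipschitz_policies (F :: ('s::finite \<Rightarrow> 'a::finite \<Rightarrow> real) \<Rightarrow> real)"
  shows "bdd_above (F ` policies)"
proof -
  obtain K where K: "\<And>p q h. is_policy p \<Longrightarrow> is_policy q \<Longrightarrow>
      (\<forall>s a. \<bar>p s a - q s a\<bar> \<le> h) \<Longrightarrow> \<bar>F p - F q\<bar> \<le> K * h"
    using assms unfolding lipschitz_policies_def by blast
  let ?w = "\<lambda>(s::'s) (a::'a). if a = undefined then 1 else 0 :: real"
  have "F q \<le> F ?w + K" if "is_policy q" for q
  proof -
    have "\<bar>q s a - ?w s a\<bar> \<le> 1" for s a
      using policy_nonneg[OF that, of s a] policy_le_1[OF that, of s a] by auto
    then have "\<bar>F q - F ?w\<bar> \<le> K * 1"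
      by (intro K that is_policy_deterministic) auto
    then show ?thesis by simp
  qed
  then show ?thesis
    unfolding policies_def by (intro bdd_aboveI2) auto
qed

section \<open>Linear fractional functions\<close>

definition linear_fractional :: "real \<Rightarrow> real \<Rightarrow> real \<Rightarrow> real \<Rightarrow> real" where
  "linear_fractional \<alpha> \<beta> \<delta> t = (\<alpha> + \<beta> * t) / (1 + \<delta> * t)"

lemma linear_fractional_diff:
  assumes "1 + \<delta> * t \<noteq> 0" "1 + \<delta> * t' \<noteq> 0"
  shows "linear_fractional \<alpha> \<beta> \<delta> t - linear_fractional \<alpha> \<beta> \<delta> t'
    = (\<beta> - \<alpha> * \<delta>) * (t - t') / ((1 + \<delta> * t) * (1 + \<delta> * t'))"
  using assms unfolding linear_fractional_def by (simp add: field_simps)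

lemma linear_fractional_less_iff:
  assumes "0 < 1 + \<delta> * t" "0 < 1 + \<delta> * t'"
  shows "linear_fractional \<alpha> \<beta> \<delta> t' < linear_fractional \<alpha> \<beta> \<delta> t \<longleftrightarrow> 0 < (\<beta> - \<alpha> * \<delta>) * (t - t')"
proof -
  have D: "0 < (1 + \<delta> * t) * (1 + \<delta> * t')"
    using assms by simp
  have "linear_fractional \<alpha> \<beta> \<delta> t' < linear_fractional \<alpha> \<beta> \<delta> t
      \<longleftrightarrow> 0 < linear_fractional \<alpha> \<beta> \<delta> t - linear_fractional \<alpha> \<beta> \<delta> t'"
    by simp
  then show ?thesis
    using linear_fractional_diff[of \<delta> t t' \<alpha> \<beta>] assms by (simp add: pos_less_divide_eq[OF D])
qed

lemma linear_fractional_bilinear_relation: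
  assumes "1 + \<delta>1 * t \<noteq> 0" "1 + \<delta>2 * t \<noteq> 0"
  shows "((\<delta>2 - \<delta>1) * linear_fractional \<alpha>1 \<beta>1 \<delta>1 t + (\<beta>1 - \<delta>2 * \<alpha>1)) * linear_fractional \<alpha>2 \<beta>2 \<delta>2 t
    = (\<beta>2 - \<alpha>2 * \<delta>1) * linear_fractional \<alpha>1 \<beta>1 \<delta>1 t + (\<alpha>2 * \<beta>1 - \<beta>2 * \<alpha>1)"
proof -
  let ?u = "linear_fractional \<alpha>1 \<beta>1 \<delta>1 t" and ?v = "linear_fractional \<alpha>2 \<beta>2 \<delta>2 t"
  have u: "?u * (1 + \<delta>1 * t) = \<alpha>1 + \<beta>1 * t" and v: "?v * (1 + \<delta>2 * t) = \<alpha>2 + \<beta>2 * t"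
    using assms unfolding linear_fractional_def by simp_all
  \<comment> \<open>The coefficients are chosen so that both sides equal
    \<open>(\<beta>1 - \<alpha>1 * \<delta>1) * (1 + \<delta>2 * t) * ?v / (1 + \<delta>1 * t)\<close>.\<close>
  have "((\<delta>2 - \<delta>1) * ?u + (\<beta>1 - \<delta>2 * \<alpha>1)) * ?v * ((1 + \<delta>1 * t) * (1 + \<delta>2 * t))
      = ((\<delta>2 - \<delta>1) * (?u * (1 + \<delta>1 * t)) + (\<beta>1 - \<delta>2 * \<alpha>1) * (1 + \<delta>1 * t)) * (?v * (1 + \<delta>2 * t))"
    by (simp add: algebra_simps)
  also have "\<dots> = ((\<beta>2 - \<alpha>2 * \<delta>1) * (?u * (1 + \<delta>1 * t)) + (\<alpha>2 * \<beta>1 - \<beta>2 * \<alpha>1) * (1 + \<delta>1 * t)) * (1 + \<delta>2 * t)"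
    unfolding u v by (simp add: algebra_simps)
  also have "\<dots> = ((\<beta>2 - \<alpha>2 * \<delta>1) * ?u + (\<alpha>2 * \<beta>1 - \<beta>2 * \<alpha>1)) * ((1 + \<delta>1 * t) * (1 + \<delta>2 * t))"
    by (simp add: algebra_simps)
  finally show ?thesis
    using assms by simp
qed

lemma continuous_on_linear_fractional:
  assumes "\<And>t. t \<in> {0..1} \<Longrightarrow> 0 < 1 + \<delta> * t"
  shows "continuous_on {0..1} (linear_fractional \<alpha> \<beta> \<delta>)"
  unfolding linear_fractional_def[abs_def] by (intro continuous_intros) (use assms in fastforce)

lemma isCont_linear_fractional: "1 + \<delta> * t \<noteq> 0 \<Longrightarrow> isCont (linear_fractional \<alpha> \<beta> \<delta>) t"
  unfolding linear_fractional_def[abs_def] by (intro continuous_intros) auto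

lemma isCont_eq_if_bounded_on_both_sides:
  fixes v :: "real \<Rightarrow> real"
  assumes cont: "isCont v x" and "a < x" "x < b"
    and right: "\<And>t. x < t \<Longrightarrow> t < b \<Longrightarrow> y \<le> v t" and left: "\<And>t. a < t \<Longrightarrow> t < x \<Longrightarrow> v t \<le> y"
  shows "v x = y"
proof (rule antisym)
  have "(v \<longlongrightarrow> v x) (at_left x)" "(v \<longlongrightarrow> v x) (at_right x)"
    using cont by (auto simp: isCont_def filterlim_at_split)
  moreover have "\<forall>\<^sub>F t in at_left x. v t \<le> y" "\<forall>\<^sub>F t in at_right x. y \<le> v t"
    using eventually_at_left_real[OF \<open>a < x\<close>] eventually_at_right_real[OF \<open>x < b\<close>] left right
    by (auto elim: eventually_mono)
  ultimately show "v x \<le> y" "y \<le> v x"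
    by (auto intro: tendsto_upperbound tendsto_lowerbound)
qed

lemma linear_fractional_order_compatible:
  fixes \<alpha>1 \<beta>1 \<delta>1 \<alpha>2 \<beta>2 \<delta>2 :: real
  defines "u \<equiv> linear_fractional \<alpha>1 \<beta>1 \<delta>1" and "v \<equiv> linear_fractional \<alpha>2 \<beta>2 \<delta>2"
  assumes "0 < 1 + \<delta>1" "0 < 1 + \<delta>2"
    and "u 0 < u 1 \<Longrightarrow> v 0 \<le> v 1" and "u 1 < u 0 \<Longrightarrow> v 1 \<le> v 0"
  shows "0 \<le> (\<beta>1 - \<alpha>1 * \<delta>1) * (\<beta>2 - \<alpha>2 * \<delta>2)"
  using assms linear_fractional_less_iff[of \<delta>1 1 0 \<alpha>1 \<beta>1] linear_fractional_less_iff[of \<delta>1 0 1 \<alpha>1 \<beta>1]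
    linear_fractional_less_iff[of \<delta>2 1 0 \<alpha>2 \<beta>2] linear_fractional_less_iff[of \<delta>2 0 1 \<alpha>2 \<beta>2]
  by (simp add: zero_le_mult_iff) (smt (verit))

lemma linear_fractional_between_near_midpoint:
  fixes \<alpha> \<beta> \<delta> :: real
  defines "u \<equiv> linear_fractional \<alpha> \<beta> \<delta>"
  assumes pos: "\<And>t. t \<in> {0..1} \<Longrightarrow> 0 < 1 + \<delta> * t" and moves: "u 0 \<noteq> u 1"
  obtains \<eta> where "0 < \<eta>" "\<And>x. \<bar>x - u (1/2)\<bar> < \<eta> \<Longrightarrow> u 0 < x \<and> x < u 1 \<or> u 1 < x \<and> x < u 0"
proof -
  have "\<beta> - \<alpha> * \<delta> \<noteq> 0"
    using linear_fractional_diff[of \<delta> 1 0 \<alpha> \<beta>] pos[of 0] pos[of 1] moves unfolding u_def by auto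
  then have "u 0 < u (1/2) \<and> u (1/2) < u 1 \<or> u 1 < u (1/2) \<and> u (1/2) < u 0"
    using linear_fractional_less_iff[of \<delta> "1/2" 0 \<alpha> \<beta>] linear_fractional_less_iff[of \<delta> 1 "1/2" \<alpha> \<beta>]
      linear_fractional_less_iff[of \<delta> 0 "1/2" \<alpha> \<beta>] linear_fractional_less_iff[of \<delta> "1/2" 1 \<alpha> \<beta>]
      pos[of 0] pos[of "1/2"] pos[of 1] unfolding u_def
    by (cases "0 < \<beta> - \<alpha> * \<delta>") (auto simp: mult_less_0_iff)
  then show ?thesis
    by (intro that[of "min \<bar>u 0 - u (1/2)\<bar> \<bar>u 1 - u (1/2)\<bar>"]) auto
qed

lemma linear_fractional_pair_relation:
  fixes \<alpha>1 \<beta>1 \<delta>1 \<alpha>2 \<beta>2 \<delta>2 x y :: real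
  defines "u \<equiv> linear_fractional \<alpha>1 \<beta>1 \<delta>1" and "v \<equiv> linear_fractional \<alpha>2 \<beta>2 \<delta>2"
  assumes pos: "\<And>t. t \<in> {0..1} \<Longrightarrow> 0 < 1 + \<delta>1 * t \<and> 0 < 1 + \<delta>2 * t"
    and between: "u 0 < x \<and> x < u 1 \<or> u 1 < x \<and> x < u 0"
    and above: "\<And>t. t \<in> {0..1} \<Longrightarrow> x < u t \<Longrightarrow> y \<le> v t"
    and below: "\<And>t. t \<in> {0..1} \<Longrightarrow> u t < x \<Longrightarrow> v t \<le> y"
  shows "((\<delta>2 - \<delta>1) * x + (\<beta>1 - \<delta>2 * \<alpha>1)) * y = (\<beta>2 - \<alpha>2 * \<delta>1) * x + (\<alpha>2 * \<beta>1 - \<beta>2 * \<alpha>1)"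
proof -
  have "continuous_on {0..1} u"
    unfolding u_def using pos by (intro continuous_on_linear_fractional) auto
  then obtain ts where ts: "0 \<le> ts" "ts \<le> 1" "u ts = x"
    using between IVT'[of u 0 x 1] IVT2'[of u 1 x 0] by force
  then have ts_strict: "0 < ts" "ts < 1"
    using between by (auto simp: less_le)
  define k where "k = \<beta>1 - \<alpha>1 * \<delta>1"
  have cross: "x < u t \<longleftrightarrow> 0 < k * (t - ts)" "u t < x \<longleftrightarrow> 0 < k * (ts - t)" if "t \<in> {0..1}" for t
    using ts that pos unfolding u_def k_def by (auto simp: linear_fractional_less_iff)
  have "k \<noteq> 0"
    using cross[of 0] cross[of 1] between by auto
  have "isCont v ts"
    unfolding v_def using pos ts by (intro isCont_linear_fractional) (smt (verit) atLeastAtMost_iff)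
  have "v ts = y"
  proof (cases "0 < k")
    case True
    show ?thesis
      using \<open>isCont v ts\<close> ts_strict
      by (rule isCont_eq_if_bounded_on_both_sides)
        (use ts_strict in \<open>auto intro!: above below simp: cross True\<close>)
  next
    case False
    then have "k < 0" using \<open>k \<noteq> 0\<close> by simp
    have "- v ts = - y"
      using continuous_minus[OF \<open>isCont v ts\<close>] ts_strict
      by (rule isCont_eq_if_bounded_on_both_sides)
        (use ts_strict in \<open>auto intro!: above below simp: cross \<open>k < 0\<close> mult_pos_neg mult_neg_neg\<close>)
    then show ?thesis by simp
  qed
  with ts show ?thesis
    unfolding u_def v_def using pos[of ts] by (auto simp: linear_fractional_bilinear_relation)
qed

section \<open>Policy evaluation along single-state segments\<close>

definition mix_at :: "('s \<Rightarrow> 'a \<Rightarrow> real) \<Rightarrow> 's \<Rightarrow> ('a \<Rightarrow> real) \<Rightarrow> real \<Rightarrow> 's \<Rightarrow> 'a \<Rightarrow> real" where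
  "mix_at p s e t = p(s := (\<lambda>a. (1 - t) * p s a + t * e a))"

lemma mix_at_0 [simp]: "mix_at p s e 0 = p"
  and mix_at_1 [simp]: "mix_at p s e 1 = p(s := e)"
  unfolding mix_at_def by auto

lemma is_policy_mix_at:
  "is_policy p \<Longrightarrow> is_dist e \<Longrightarrow> 0 \<le> t \<Longrightarrow> t \<le> 1 \<Longrightarrow> is_policy (mix_at p s e t)"
  unfolding mix_at_def
  by (intro is_policy_fun_upd is_dist_convex) (auto simp: is_policy_def)

lemma sum_mix_at:
  fixes y :: "'s::finite \<Rightarrow> real" and W :: "'s \<Rightarrow> 'a::finite \<Rightarrow> real"
  shows "(\<Sum>s\<in>UNIV. \<Sum>a\<in>UNIV. y s * mix_at p s0 e t s a * W s a)
     = (\<Sum>s\<in>UNIV. \<Sum>a\<in>UNIV. y s * p s a * W s a) + t * y s0 * (\<Sum>a\<in>UNIV. (e a - p s0 a) * W s0 a)"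
proof -
  have "(\<Sum>a\<in>UNIV. y s * mix_at p s0 e t s a * W s a) = (\<Sum>a\<in>UNIV. y s * p s a * W s a)
      + (if s = s0 then t * y s0 * (\<Sum>a\<in>UNIV. (e a - p s0 a) * W s0 a) else 0)" for s
    by (cases "s = s0") (simp_all add: mix_at_def algebra_simps sum.distrib sum_subtractf sum_distrib_left)
  then show ?thesis
    by (simp add: sum.distrib)
qed

definition mix :: "real \<Rightarrow> ('s \<Rightarrow> 'a \<Rightarrow> real) \<Rightarrow> ('s \<Rightarrow> 'a \<Rightarrow> real) \<Rightarrow> 's \<Rightarrow> 'a \<Rightarrow> real" where
  "mix t p q = (\<lambda>s a. (1 - t) * p s a + t * q s a)"

lemma mix_0 [simp]: "mix 0 p q = p" and mix_1 [simp]: "mix 1 p q = q"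
  unfolding mix_def by simp_all

lemma mix_at_eq_mix: "mix_at p s e t = mix t p (p(s := e))"
  unfolding mix_at_def mix_def by (auto simp: fun_eq_iff algebra_simps)

lemma is_policy_mix: "is_policy p \<Longrightarrow> is_policy q \<Longrightarrow> 0 \<le> t \<Longrightarrow> t \<le> 1 \<Longrightarrow> is_policy (mix t p q)"
  unfolding is_policy_def mix_def by (simp add: is_dist_convex)

lemma near_mix:
  assumes "near w \<rho> p" "near w \<rho> q" "0 \<le> t" "t \<le> 1"
  shows "near w \<rho> (mix t p q)"
  unfolding near_def
proof (intro allI)
  fix s a
  have "mix t p q s a - w s a = (1 - t) * (p s a - w s a) + t * (q s a - w s a)"
    unfolding mix_def by (simp add: algebra_simps)
  also have "\<bar>\<dots>\<bar> \<le> (1 - t) * \<bar>p s a - w s a\<bar> + t * \<bar>q s a - w s a\<bar>"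
    using abs_triangle_ineq assms(3,4) by (metis abs_mult abs_of_nonneg diff_ge_0_iff_ge)
  also have "\<dots> < \<rho>"
    using assms unfolding near_def by (intro convex_bound_lt) auto
  finally show "\<bar>mix t p q s a - w s a\<bar> < \<rho>" .
qed

lemma near_shrink:
  fixes w m :: "'s::finite \<Rightarrow> 'a::finite \<Rightarrow> real"
  assumes "near w \<rho> m"
  obtains r where "0 < r" "\<And>q. near m r q \<Longrightarrow> near w \<rho> q"
proof -
  define M where "M = Max (range (\<lambda>(s, a). \<bar>m s a - w s a\<bar>))"
  have le_M: "\<bar>m s a - w s a\<bar> \<le> M" for s a
    unfolding M_def by (rule Max_ge) auto
  have "M \<in> range (\<lambda>(s, a). \<bar>m s a - w s a\<bar>)"
    unfolding M_def by (rule Max_in) auto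
  then have "M < \<rho>"
    using assms unfolding near_def by auto
  show ?thesis
  proof (rule that[of "\<rho> - M"])
    show "0 < \<rho> - M" using \<open>M < \<rho>\<close> by simp
    show "near w \<rho> q" if "near m (\<rho> - M) q" for q
      unfolding near_def
    proof (intro allI)
      fix s a
      show "\<bar>q s a - w s a\<bar> < \<rho>"
        using that[unfolded near_def, rule_format, of s a] le_M[of s a] by linarith
    qed
  qed
qed

lemma continuous_on_mix:
  assumes "lipschitz_policies F" "is_policy p" "is_policy q"
  shows "continuous_on {0..1} (\<lambda>t. F (mix t p q))"
proof -
  obtain K where K: "0 \<le> K" "\<And>p q h. is_policy p \<Longrightarrow> is_policy q \<Longrightarrow>
      (\<forall>s a. \<bar>p s a - q s a\<bar> \<le> h) \<Longrightarrow> \<bar>F p - F q\<bar> \<le> K * h"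
    using assms(1) unfolding lipschitz_policies_def by blast
  have "\<bar>F (mix x p q) - F (mix y p q)\<bar> \<le> K * \<bar>x - y\<bar>" if "x \<in> {0..1}" "y \<in> {0..1}" for x y
  proof (rule K(2))
    show "is_policy (mix x p q)" "is_policy (mix y p q)"
      using that assms by (auto intro: is_policy_mix)
    have "\<bar>mix x p q s a - mix y p q s a\<bar> = \<bar>x - y\<bar> * \<bar>q s a - p s a\<bar>" for s a
      unfolding mix_def by (simp add: abs_mult[symmetric] algebra_simps)
    moreover have "\<bar>q s a - p s a\<bar> \<le> 1" for s a
      using assms policy_nonneg policy_le_1 by (smt (verit))
    ultimately show "\<forall>s a. \<bar>mix x p q s a - mix y p q s a\<bar> \<le> \<bar>x - y\<bar>"
      by (simp add: mult_left_le)
  qed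
  then have "K-lipschitz_on {0..1} (\<lambda>t. F (mix t p q))"
    using K(1) by (intro lipschitz_onI) (auto simp: dist_real_def)
  then show ?thesis
    by (rule lipschitz_on_continuous_on)
qed

\<comment> \<open>The occupancy generated by the signed source that moving row \<open>s0\<close> of \<open>p\<close> towards \<open>e\<close>
  injects after one step; it describes how occupancy measures change along \<open>mix_at p s0 e\<close>.\<close>
definition deviation_occupancy :: "('s::finite \<Rightarrow> 'a::finite \<Rightarrow> 's \<Rightarrow> real) \<Rightarrow> ('s \<Rightarrow> 'a \<Rightarrow> real)
     \<Rightarrow> real \<Rightarrow> 's \<Rightarrow> ('a \<Rightarrow> real) \<Rightarrow> 's \<Rightarrow> real" where
  "deviation_occupancy T p \<gamma> s0 e =
     (\<lambda>s. \<gamma> * occupancy (\<lambda>s'. \<Sum>a\<in>UNIV. (e a - p s0 a) * T s0 a s') T p \<gamma> s)"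

context
  fixes T :: "'s::finite \<Rightarrow> 'a::finite \<Rightarrow> 's \<Rightarrow> real" and p :: "'s \<Rightarrow> 'a \<Rightarrow> real"
    and \<gamma> :: real and s0 :: 's and e :: "'a \<Rightarrow> real"
  assumes T: "is_transition T" and p: "is_policy p" and \<gamma>: "0 \<le> \<gamma>" "\<gamma> < 1" and e: "is_dist e"
begin

lemma deviation_occupancy_bellman:
  "deviation_occupancy T p \<gamma> s0 e s' = \<gamma> * (\<Sum>a\<in>UNIV. (e a - p s0 a) * T s0 a s')
     + \<gamma> * (\<Sum>s\<in>UNIV. \<Sum>a\<in>UNIV. deviation_occupancy T p \<gamma> s0 e s * p s a * T s a s')"
  unfolding deviation_occupancy_def
  by (subst occupancy_bellman[OF T p \<gamma>]) (simp add: algebra_simps sum_distrib_left)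

lemma occupancy_mix_at:
  assumes t: "0 \<le> t" "t \<le> 1"
  shows "occupancy \<mu> T (mix_at p s0 e t) \<gamma> s
    = occupancy \<mu> T p \<gamma> s + t * occupancy \<mu> T (mix_at p s0 e t) \<gamma> s0 * deviation_occupancy T p \<gamma> s0 e s"
proof -
  let ?y = "occupancy \<mu> T (mix_at p s0 e t) \<gamma>" and ?o = "occupancy \<mu> T p \<gamma>"
    and ?g = "deviation_occupancy T p \<gamma> s0 e"
  let ?P = "\<lambda>x s'. \<Sum>s\<in>UNIV. \<Sum>a\<in>UNIV. x s * p s a * T s a s'"
    and ?E = "\<lambda>s'. \<Sum>a\<in>UNIV. (e a - p s0 a) * T s0 a s'"
  have "?y s - (?o s + t * ?y s0 * ?g s) = 0"
  proof (rule bellman_homogeneous_eq_0[OF T p \<gamma>, where x = "\<lambda>s. ?y s - (?o s + t * ?y s0 * ?g s)"])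
    fix s'
    have y: "?y s' = \<mu> s' + \<gamma> * (?P ?y s' + t * ?y s0 * ?E s')"
      using occupancy_bellman[OF T is_policy_mix_at[OF p e t, of s0] \<gamma>, of \<mu> s']
      unfolding sum_mix_at .
    have lin: "?P (\<lambda>s. ?y s - (?o s + t * ?y s0 * ?g s)) s' = ?P ?y s' - ?P ?o s' - t * ?y s0 * ?P ?g s'"
      by (simp add: algebra_simps sum_subtractf sum.distrib sum_distrib_left)
    have alg: "y = \<mu> + \<gamma> * (A + t * Y * E) \<Longrightarrow> z = \<mu> + \<gamma> * B \<Longrightarrow> g = \<gamma> * E + \<gamma> * G
        \<Longrightarrow> y - (z + t * Y * g) = \<gamma> * (A - B - t * Y * G)" for y z g \<mu> A B G E Y :: real
      by (simp add: algebra_simps)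
    show "?y s' - (?o s' + t * ?y s0 * ?g s') = \<gamma> * ?P (\<lambda>s. ?y s - (?o s + t * ?y s0 * ?g s)) s'"
      unfolding lin
      by (rule alg[OF y occupancy_bellman[OF T p \<gamma>, of \<mu> s'] deviation_occupancy_bellman[of s']])
  qed
  then show ?thesis by simp
qed

lemma mix_at_denominator_pos:
  assumes t: "0 \<le> t" "t \<le> 1"
  shows "0 < 1 - t * deviation_occupancy T p \<gamma> s0 e s0"
proof -
  let ?g = "deviation_occupancy T p \<gamma> s0 e"
  have nonzero: "1 - t' * ?g s0 \<noteq> 0" if t': "0 \<le> t'" "t' \<le> 1" for t'
  proof
    assume "1 - t' * ?g s0 = 0"
    then have root: "t' * ?g s0 = 1" by simp
    \<comment> \<open>Then the deviation occupancy is a fixed point of the homogeneous Bellman operator of the mixed policy.\<close>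
    have "?g s0 = 0"
    proof (rule bellman_homogeneous_eq_0[OF T is_policy_mix_at[OF p e t', of s0] \<gamma>, where x = ?g])
      show "?g s' = \<gamma> * (\<Sum>s\<in>UNIV. \<Sum>a\<in>UNIV. ?g s * mix_at p s0 e t' s a * T s a s')" for s'
        using deviation_occupancy_bellman[of s'] unfolding sum_mix_at root by (simp add: distrib_left)
    qed
    with root show False by simp
  qed
  show ?thesis
  proof (cases "?g s0 \<le> 0")
    case True
    then show ?thesis using t by (smt (verit) mult_nonneg_nonpos)
  next
    case False
    have "0 < 1 - ?g s0"
    proof (rule ccontr)
      assume "\<not> 0 < 1 - ?g s0"
      then have "0 \<le> 1 / ?g s0" "1 / ?g s0 \<le> 1" using False by auto
      from nonzero[OF this] False show False by simp
    qed
    moreover have "t * ?g s0 \<le> ?g s0" using t False by (simp add: mult_left_le_one_le)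
    ultimately show ?thesis by simp
  qed
qed

lemma J_mix_at:
  assumes t: "0 \<le> t" "t \<le> 1"
  shows "J \<mu> R \<gamma> T (mix_at p s0 e t) = J \<mu> R \<gamma> T p
    + t * occupancy \<mu> T p \<gamma> s0 / (1 - t * deviation_occupancy T p \<gamma> s0 e s0)
      * ((\<Sum>s\<in>UNIV. \<Sum>a\<in>UNIV. deviation_occupancy T p \<gamma> s0 e s * p s a * R s a)
         + (\<Sum>a\<in>UNIV. (e a - p s0 a) * R s0 a))"
proof -
  let ?y = "occupancy \<mu> T (mix_at p s0 e t) \<gamma>" and ?o = "occupancy \<mu> T p \<gamma>"
    and ?g = "deviation_occupancy T p \<gamma> s0 e"
  define Y where "Y = ?y s0"
  have y: "?y s = ?o s + t * Y * ?g s" for s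
    unfolding Y_def by (rule occupancy_mix_at[OF t])
  have "Y = ?o s0 / (1 - t * ?g s0)"
    using y[of s0] mix_at_denominator_pos[OF t] unfolding Y_def[symmetric]
    by (simp add: field_simps)
  moreover have "J \<mu> R \<gamma> T (mix_at p s0 e t) = J \<mu> R \<gamma> T p + t * Y
      * ((\<Sum>s\<in>UNIV. \<Sum>a\<in>UNIV. ?g s * p s a * R s a) + (\<Sum>a\<in>UNIV. (e a - p s0 a) * R s0 a))"
    unfolding J_eq_occupancy[OF T is_policy_mix_at[OF p e t, of s0] \<gamma>] J_eq_occupancy[OF T p \<gamma>]
      sum_mix_at Y_def[symmetric]
    unfolding y
    by (simp add: algebra_simps sum.distrib sum_distrib_left)
  ultimately show ?thesis by simp
qed

end

definition linear_fractional_on_segments :: "(('s::finite \<Rightarrow> 'a::finite \<Rightarrow> real) \<Rightarrow> real) \<Rightarrow> bool" where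
  "linear_fractional_on_segments F \<longleftrightarrow> (\<forall>p s e. is_policy p \<longrightarrow> is_dist e \<longrightarrow>
      (\<exists>\<alpha> \<beta> \<delta>. \<forall>t\<in>{0..1}. 0 < 1 + \<delta> * t \<and> F (mix_at p s e t) = linear_fractional \<alpha> \<beta> \<delta> t))"

lemma linear_fractional_on_segments_J:
  fixes \<mu> :: "'s::finite \<Rightarrow> real" and R :: "'s \<Rightarrow> 'a::finite \<Rightarrow> real"
  assumes T: "is_transition T" and \<gamma>: "0 \<le> \<gamma>" "\<gamma> < 1"
  shows "linear_fractional_on_segments (J \<mu> R \<gamma> T)"
  unfolding linear_fractional_on_segments_def
proof (intro allI impI)
  fix p :: "'s \<Rightarrow> 'a \<Rightarrow> real" and s0 :: 's and e :: "'a \<Rightarrow> real"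
  assume p: "is_policy p" and e: "is_dist e"
  let ?g = "deviation_occupancy T p \<gamma> s0 e s0" and ?J0 = "J \<mu> R \<gamma> T p" and ?o = "occupancy \<mu> T p \<gamma> s0"
    and ?\<kappa> = "(\<Sum>s\<in>UNIV. \<Sum>a\<in>UNIV. deviation_occupancy T p \<gamma> s0 e s * p s a * R s a)
      + (\<Sum>a\<in>UNIV. (e a - p s0 a) * R s0 a)"
  have "0 < 1 + (- ?g) * t \<and> J \<mu> R \<gamma> T (mix_at p s0 e t) = linear_fractional ?J0 (?o * ?\<kappa> - ?J0 * ?g) (- ?g) t"
    if t: "0 \<le> t" "t \<le> 1" for t
  proof -
    have "0 < 1 - t * ?g"
      by (rule mix_at_denominator_pos[OF T p \<gamma> e t])
    moreover note J_mix_at[OF T p \<gamma> e t, of \<mu> R]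
    ultimately show ?thesis
      unfolding linear_fractional_def by (simp add: field_simps)
  qed
  then show "\<exists>\<alpha> \<beta> \<delta>. \<forall>t\<in>{0..1}. 0 < 1 + \<delta> * t \<and> J \<mu> R \<gamma> T (mix_at p s0 e t) = linear_fractional \<alpha> \<beta> \<delta> t"
    by force
qed

section \<open>Propagation of relations from a ball\<close>

lemma quadratic_eq_0_if_vanishes_on_interval:
  fixes c0 c1 c2 t0 :: real
  assumes t0: "0 < t0" and vanish: "\<forall>t\<in>{0..t0}. c0 + c1 * t + c2 * t\<^sup>2 = 0"
  shows "c0 + c1 * t + c2 * t\<^sup>2 = 0"
proof -
  have c0: "c0 = 0"
    using vanish[rule_format, of 0] t0 by simp
  have lin: "c1 + c2 * x = 0" if "0 < x" "x \<le> t0" for x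
  proof -
    have "x * (c1 + c2 * x) = 0"
      using vanish[rule_format, of x] that c0 by (simp add: power2_eq_square algebra_simps)
    with that show ?thesis by simp
  qed
  then have "c1 + c2 * (t0 / 2) = 0" "c1 + c2 * t0 = 0"
    using lin[of "t0 / 2"] lin[of t0] t0 by auto
  then have "c2 * t0 = 0"
    by linarith
  then have "c2 = 0" "c1 = 0"
    using t0 \<open>c1 + c2 * t0 = 0\<close> by auto
  with c0 show ?thesis by simp
qed

lemma constant_on_ball_if_row_invariant:
  fixes F :: "('s::finite \<Rightarrow> 'a::finite \<Rightarrow> real) \<Rightarrow> real"
  assumes inv: "\<And>p s e. is_policy p \<Longrightarrow> is_dist e \<Longrightarrow> near w \<rho> p \<Longrightarrow> near w \<rho> (p(s := e))
      \<Longrightarrow> F (p(s := e)) = F p"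
    and w: "is_policy w" and q: "is_policy q" "near w \<rho> q"
  shows "F q = F w"
proof -
  have "\<forall>q. is_policy q \<longrightarrow> near w \<rho> q \<longrightarrow> (\<forall>s. s \<notin> X \<longrightarrow> q s = w s) \<longrightarrow> F q = F w"
    if "finite X" for X :: "'s set"
    using that
  proof (induction X rule: finite_induct)
    case empty
    then show ?case by (auto intro!: arg_cong[where f = F])
  next
    case (insert s X)
    show ?case
    proof (intro allI impI)
      fix q assume q: "is_policy q" "near w \<rho> q" and agree: "\<forall>s'. s' \<notin> insert s X \<longrightarrow> q s' = w s'"
      have "0 < \<rho>"
        using q(2) unfolding near_def by (meson abs_ge_zero le_less_trans)
      then have q': "is_policy (q(s := w s))" "near w \<rho> (q(s := w s))"
        using q w unfolding near_def by (auto intro: is_policy_fun_upd simp: is_policy_def)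
      with insert.IH agree have "F (q(s := w s)) = F w"
        by auto
      moreover have "F ((q(s := w s))(s := q s)) = F (q(s := w s))"
        using q q' by (intro inv) (auto simp: is_policy_def)
      ultimately show "F q = F w" by simp
    qed
  qed
  from this[of UNIV] q show ?thesis by simp
qed

lemma propagate_from_ball:
  fixes P :: "('s::finite \<Rightarrow> 'a::finite \<Rightarrow> real) \<Rightarrow> bool"
  assumes rigid: "\<And>q s e t0. is_policy q \<Longrightarrow> is_dist e \<Longrightarrow> 0 < t0 \<Longrightarrow> t0 \<le> 1 \<Longrightarrow>
        (\<forall>t\<in>{0..t0}. P (mix_at q s e t)) \<Longrightarrow> P (q(s := e))"
    and m: "is_policy m" and r: "0 < r" and ball: "\<And>q. is_policy q \<Longrightarrow> near m r q \<Longrightarrow> P q"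
    and q: "is_policy q"
  shows "P q"
proof -
  \<comment> \<open>Induction on the rows allowed to leave the ball: such a row is restored along
    a segment whose initial part stays in the ball.\<close>
  have "\<forall>q. is_policy q \<longrightarrow> (\<forall>s. s \<notin> X \<longrightarrow> (\<forall>a. \<bar>q s a - m s a\<bar> < r)) \<longrightarrow> P q"
    if "finite X" for X :: "'s set"
    using that
  proof (induction X rule: finite_induct)
    case empty
    then show ?case using ball unfolding near_def by auto
  next
    case (insert s X)
    show ?case
    proof (intro allI impI)
      fix q assume q: "is_policy q" and close: "\<forall>s'. s' \<notin> insert s X \<longrightarrow> (\<forall>a. \<bar>q s' a - m s' a\<bar> < r)"
      let ?q' = "q(s := m s)"
      have q': "is_policy ?q'"
        using q m by (auto intro: is_policy_fun_upd simp: is_policy_def)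
      define t0 where "t0 = min 1 (r / 2)"
      have t0: "0 < t0" "t0 \<le> 1"
        unfolding t0_def using r by auto
      have "P (mix_at ?q' s (q s) t)" if t: "t \<in> {0..t0}" for t
      proof -
        have "\<bar>mix_at ?q' s (q s) t s a - m s a\<bar> < r" for a
        proof -
          have "mix_at ?q' s (q s) t s a - m s a = t * (q s a - m s a)"
            unfolding mix_at_def by (simp add: algebra_simps)
          then have "\<bar>mix_at ?q' s (q s) t s a - m s a\<bar> = t * \<bar>q s a - m s a\<bar>"
            using t by (simp add: abs_mult)
          also have "\<dots> \<le> t"
            using t policy_nonneg[OF q, of s a] policy_le_1[OF q, of s a]
              policy_nonneg[OF m, of s a] policy_le_1[OF m, of s a]
            by (intro mult_left_le) auto
          finally show ?thesis
            using t r unfolding t0_def by auto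
        qed
        then have "\<forall>s'. s' \<notin> X \<longrightarrow> (\<forall>a. \<bar>mix_at ?q' s (q s) t s' a - m s' a\<bar> < r)"
          using close unfolding mix_at_def by auto
        moreover have "is_policy (mix_at ?q' s (q s) t)"
          using t t0 by (intro is_policy_mix_at q' is_policy_row q) auto
        ultimately show ?thesis
          using insert.IH by blast
      qed
      then have "P (?q'(s := q s))"
        using q q' t0 by (intro rigid) (auto simp: is_policy_def)
      then show "P q" by simp
    qed
  qed
  from this[of UNIV] q show ?thesis by simp
qed

lemma linear_fractional_on_segments_const: "linear_fractional_on_segments (\<lambda>_. k)"
  unfolding linear_fractional_on_segments_def linear_fractional_def
  by (intro allI impI exI[of _ k] exI[of _ 0]) simp

lemma bilinear_relation_rigid:
  fixes F G :: "('s::finite \<Rightarrow> 'a::finite \<Rightarrow> real) \<Rightarrow> real"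
  assumes F: "linear_fractional_on_segments F" and G: "linear_fractional_on_segments G"
    and q: "is_policy q" and e: "is_dist e" and t0: "0 < t0" "t0 \<le> 1"
    and rel: "\<forall>t\<in>{0..t0}. (c * F (mix_at q s e t) + d) * G (mix_at q s e t) = a * F (mix_at q s e t) + b"
  shows "(c * F (q(s := e)) + d) * G (q(s := e)) = a * F (q(s := e)) + b"
proof -
  obtain \<alpha>1 \<beta>1 \<delta>1 where F_seg: "\<forall>t\<in>{0..1}. 0 < 1 + \<delta>1 * t \<and> F (mix_at q s e t) = linear_fractional \<alpha>1 \<beta>1 \<delta>1 t"
    using F q e unfolding linear_fractional_on_segments_def by blast
  obtain \<alpha>2 \<beta>2 \<delta>2 where G_seg: "\<forall>t\<in>{0..1}. 0 < 1 + \<delta>2 * t \<and> G (mix_at q s e t) = linear_fractional \<alpha>2 \<beta>2 \<delta>2 t"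
    using G q e unfolding linear_fractional_on_segments_def by blast
  let ?\<Phi> = "\<lambda>t. (c * F (mix_at q s e t) + d) * G (mix_at q s e t) - (a * F (mix_at q s e t) + b)"
  define X0 X1 Z0 Z1 where "X0 = c * \<alpha>1 + d" and "X1 = c * \<beta>1 + d * \<delta>1"
    and "Z0 = a * \<alpha>1 + b" and "Z1 = a * \<beta>1 + b * \<delta>1"
  \<comment> \<open>Clearing denominators turns the relation along the segment into a quadratic polynomial in t.\<close>
  have quad: "?\<Phi> t * ((1 + \<delta>1 * t) * (1 + \<delta>2 * t))
      = (X0 * \<alpha>2 - Z0) + (X0 * \<beta>2 + X1 * \<alpha>2 - Z0 * \<delta>2 - Z1) * t + (X1 * \<beta>2 - Z1 * \<delta>2) * t\<^sup>2"
    if t: "t \<in> {0..1}" for t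
  proof -
    have "0 < 1 + \<delta>1 * t \<and> F (mix_at q s e t) = linear_fractional \<alpha>1 \<beta>1 \<delta>1 t"
      and "0 < 1 + \<delta>2 * t \<and> G (mix_at q s e t) = linear_fractional \<alpha>2 \<beta>2 \<delta>2 t"
      using F_seg G_seg t by blast+
    then have u: "F (mix_at q s e t) * (1 + \<delta>1 * t) = \<alpha>1 + \<beta>1 * t"
      and v: "G (mix_at q s e t) * (1 + \<delta>2 * t) = \<alpha>2 + \<beta>2 * t"
      unfolding linear_fractional_def by auto
    have "?\<Phi> t * ((1 + \<delta>1 * t) * (1 + \<delta>2 * t))
        = (c * (F (mix_at q s e t) * (1 + \<delta>1 * t)) + d * (1 + \<delta>1 * t)) * (G (mix_at q s e t) * (1 + \<delta>2 * t))
          - (a * (F (mix_at q s e t) * (1 + \<delta>1 * t)) + b * (1 + \<delta>1 * t)) * (1 + \<delta>2 * t)"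
      by (simp add: algebra_simps)
    also have "\<dots> = (c * (\<alpha>1 + \<beta>1 * t) + d * (1 + \<delta>1 * t)) * (\<alpha>2 + \<beta>2 * t)
        - (a * (\<alpha>1 + \<beta>1 * t) + b * (1 + \<delta>1 * t)) * (1 + \<delta>2 * t)"
      unfolding u v ..
    finally show ?thesis
      unfolding X0_def X1_def Z0_def Z1_def by (simp add: algebra_simps power2_eq_square)
  qed
  have "\<forall>t\<in>{0..t0}. (X0 * \<alpha>2 - Z0) + (X0 * \<beta>2 + X1 * \<alpha>2 - Z0 * \<delta>2 - Z1) * t + (X1 * \<beta>2 - Z1 * \<delta>2) * t\<^sup>2 = 0"
    using rel quad t0 by (auto simp flip: quad)
  then have "(X0 * \<alpha>2 - Z0) + (X0 * \<beta>2 + X1 * \<alpha>2 - Z0 * \<delta>2 - Z1) * 1 + (X1 * \<beta>2 - Z1 * \<delta>2) * 1\<^sup>2 = 0"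
    by (rule quadratic_eq_0_if_vanishes_on_interval[OF t0(1)])
  then have "?\<Phi> 1 * ((1 + \<delta>1 * 1) * (1 + \<delta>2 * 1)) = 0"
    using quad[of 1] by simp
  moreover have "0 < 1 + \<delta>1 * 1" "0 < 1 + \<delta>2 * 1"
    using bspec[OF F_seg, of 1] bspec[OF G_seg, of 1] by auto
  ultimately show ?thesis
    by simp
qed

lemma bilinear_relation_propagates:
  fixes F G :: "('s::finite \<Rightarrow> 'a::finite \<Rightarrow> real) \<Rightarrow> real"
  assumes "linear_fractional_on_segments F" "linear_fractional_on_segments G"
    and "is_policy m" "0 < r" "\<And>q. is_policy q \<Longrightarrow> near m r q \<Longrightarrow> (c * F q + d) * G q = a * F q + b"
    and "is_policy q"
  shows "(c * F q + d) * G q = a * F q + b"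
  using propagate_from_ball[where P = "\<lambda>q. (c * F q + d) * G q = a * F q + b"] bilinear_relation_rigid assms
  by blast

lemma constant_propagates:
  assumes "linear_fractional_on_segments F" "is_policy m" "0 < r"
    and "\<And>q. is_policy q \<Longrightarrow> near m r q \<Longrightarrow> F q = k" and "is_policy q"
  shows "F q = k"
proof -
  have "(0 * F q + k) * (\<lambda>_. 1) q = 1 * F q + 0"
    by (rule bilinear_relation_propagates[OF assms(1) linear_fractional_on_segments_const assms(2,3) _ assms(5)])
      (simp add: assms(4))
  then show ?thesis by simp
qed

section \<open>Exploitability of order-incompatible evaluations\<close>

lemma local_bilinear_relation:
  fixes F G :: "('s::finite \<Rightarrow> 'a::finite \<Rightarrow> real) \<Rightarrow> real" and U :: "('s \<Rightarrow> 'a \<Rightarrow> real) set"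
  assumes F: "linear_fractional_on_segments F" "lipschitz_policies F"
    and G: "linear_fractional_on_segments G"
    and p: "is_policy p" and e: "is_dist e" and moves: "F (p(s := e)) \<noteq> F p"
    and segment: "\<And>t. t \<in> {0..1} \<Longrightarrow> mix_at p s e t \<in> U"
    and r0: "0 < r0" and ball: "\<And>q. is_policy q \<Longrightarrow> near (mix_at p s e (1/2)) r0 q \<Longrightarrow> q \<in> U"
    and compatible: "\<And>q q'. q \<in> U \<Longrightarrow> q' \<in> U \<Longrightarrow> F q' < F q \<Longrightarrow> G q' \<le> G q"
  obtains m r c d a b where "is_policy m" "0 < r"
    "\<And>q. is_policy q \<Longrightarrow> near m r q \<Longrightarrow> (c * F q + d) * G q = a * F q + b"
    "0 \<le> a * d - b * c" "c * F p + d \<noteq> 0"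
proof -
  obtain \<alpha>1 \<beta>1 \<delta>1 where F_seg: "\<forall>t\<in>{0..1}. 0 < 1 + \<delta>1 * t \<and> F (mix_at p s e t) = linear_fractional \<alpha>1 \<beta>1 \<delta>1 t"
    using F(1) p e unfolding linear_fractional_on_segments_def by blast
  obtain \<alpha>2 \<beta>2 \<delta>2 where G_seg: "\<forall>t\<in>{0..1}. 0 < 1 + \<delta>2 * t \<and> G (mix_at p s e t) = linear_fractional \<alpha>2 \<beta>2 \<delta>2 t"
    using G p e unfolding linear_fractional_on_segments_def by blast
  let ?u = "linear_fractional \<alpha>1 \<beta>1 \<delta>1" and ?v = "linear_fractional \<alpha>2 \<beta>2 \<delta>2"
  define a b c d where "a = \<beta>2 - \<alpha>2 * \<delta>1" and "b = \<alpha>2 * \<beta>1 - \<beta>2 * \<alpha>1"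
    and "c = \<delta>2 - \<delta>1" and "d = \<beta>1 - \<delta>2 * \<alpha>1"
  have pos: "0 < 1 + \<delta>1 * t \<and> 0 < 1 + \<delta>2 * t" if "t \<in> {0..1}" for t
    using F_seg G_seg that by blast
  have Fu: "F (mix_at p s e t) = ?u t" and Gv: "G (mix_at p s e t) = ?v t" if "t \<in> {0..1}" for t
    using F_seg G_seg that by blast+
  have u01: "?u 0 = F p" "?u 1 = F (p(s := e))"
    using Fu[of 0] Fu[of 1] by simp_all
  have "0 \<le> (\<beta>1 - \<alpha>1 * \<delta>1) * (\<beta>2 - \<alpha>2 * \<delta>2)"
    using pos[of 1] Fu[of 0] Fu[of 1] Gv[of 0] Gv[of 1]
      compatible[OF segment[of 0] segment[of 1]] compatible[OF segment[of 1] segment[of 0]]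
    by (intro linear_fractional_order_compatible) auto
  moreover have "a * d - b * c = (\<beta>1 - \<alpha>1 * \<delta>1) * (\<beta>2 - \<alpha>2 * \<delta>2)"
    unfolding a_def b_def c_def d_def by (simp add: algebra_simps)
  ultimately have ad_bc: "0 \<le> a * d - b * c" by simp
  have "c * F p + d = \<beta>1 - \<alpha>1 * \<delta>1"
    using u01 unfolding c_def d_def linear_fractional_def by (simp add: algebra_simps)
  moreover have "\<beta>1 - \<alpha>1 * \<delta>1 \<noteq> 0"
    using linear_fractional_diff[of \<delta>1 1 0 \<alpha>1 \<beta>1] pos[of 1] u01 moves by auto
  ultimately have cFd: "c * F p + d \<noteq> 0" by simp
  define m where "m = mix_at p s e (1/2)"
  have m: "is_policy m"
    unfolding m_def using p e by (intro is_policy_mix_at) auto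
  have "\<And>t. t \<in> {0..1} \<Longrightarrow> 0 < 1 + \<delta>1 * t" "?u 0 \<noteq> ?u 1"
    using pos u01 moves by auto
  then obtain \<eta> where "0 < \<eta>"
    and between: "\<And>x. \<bar>x - ?u (1/2)\<bar> < \<eta> \<Longrightarrow> ?u 0 < x \<and> x < ?u 1 \<or> ?u 1 < x \<and> x < ?u 0"
    using linear_fractional_between_near_midpoint by blast
  obtain r1 where r1: "0 < r1" "\<And>q. is_policy q \<Longrightarrow> near m r1 q \<Longrightarrow> \<bar>F q - F m\<bar> < \<eta>"
    using lipschitz_policies_near[OF F(2) m \<open>0 < \<eta>\<close>] by blast
  show ?thesis
  proof (rule that[OF m _ _ ad_bc cFd])
    show "0 < min r0 r1" using r0 r1 by simp
    fix q assume q: "is_policy q" "near m (min r0 r1) q"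
    then have "q \<in> U"
      using ball unfolding m_def near_def by auto
    have "\<bar>F q - ?u (1/2)\<bar> < \<eta>"
      using r1(2)[OF q(1)] q(2) Fu[of "1/2"] unfolding m_def near_def by auto
    show "(c * F q + d) * G q = a * F q + b"
      unfolding a_def b_def c_def d_def
    proof (rule linear_fractional_pair_relation[OF pos between[OF \<open>\<bar>F q - ?u (1/2)\<bar> < \<eta>\<close>]])
      show "G q \<le> ?v t" if "t \<in> {0..1}" "F q < ?u t" for t
        using compatible[OF segment \<open>q \<in> U\<close>] that Fu Gv by auto
      show "?v t \<le> G q" if "t \<in> {0..1}" "?u t < F q" for t
        using compatible[OF \<open>q \<in> U\<close> segment] that Fu Gv by auto
    qed
  qed
qed

lemma bilinear_relation_equivalent:
  fixes F G :: "('s::finite \<Rightarrow> 'a::finite \<Rightarrow> real) \<Rightarrow> real"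
  assumes F: "lipschitz_policies F"
    and rel: "\<And>q. is_policy q \<Longrightarrow> (c * F q + d) * G q = a * F q + b"
    and det: "0 < a * d - b * c" and P: "P \<subseteq> policies"
  shows "equivalent_on F G P"
proof -
  have nonzero: "c * F q + d \<noteq> 0" if "is_policy q" for q
  proof
    assume "c * F q + d = 0"
    moreover from this have "a * F q + b = 0"
      using rel[OF that] by simp
    moreover have "a * d - b * c = a * (c * F q + d) - c * (a * F q + b)"
      by (simp add: algebra_simps)
    ultimately show False
      using det by simp
  qed
  \<comment> \<open>The policies are path-connected and \<open>c * F + d\<close> is continuous and never zero on them.\<close>
  have same_sign: "0 < (c * F q + d) * (c * F q' + d)" if q: "is_policy q" "is_policy q'" for q q'
  proof (rule ccontr)
    assume "\<not> ?thesis"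
    then have opposite: "(c * F q + d) * (c * F q' + d) < 0"
      using nonzero[OF q(1)] nonzero[OF q(2)] by (simp add: linorder_not_less order_le_less)
    define h where "h t = c * F (mix t q q') + d" for t
    have "continuous_on {0..1} h"
      unfolding h_def
      by (intro continuous_on_add continuous_on_mult continuous_on_const continuous_on_mix[OF F q])
    moreover have "h 0 \<le> 0 \<and> 0 \<le> h 1 \<or> h 1 \<le> 0 \<and> 0 \<le> h 0"
      using opposite unfolding h_def by (auto simp: mult_less_0_iff)
    ultimately obtain t where "0 \<le> t" "t \<le> 1" "h t = 0"
      using IVT'[of h 0 0 1] IVT2'[of h 1 0 0] by auto
    then show False
      using nonzero[OF is_policy_mix[OF q]] unfolding h_def by blast
  qed
  show ?thesis
    unfolding equivalent_on_def
  proof (intro ballI)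
    fix x y assume "x \<in> P" "y \<in> P"
    then have x: "is_policy x" and y: "is_policy y"
      using P unfolding policies_def by auto
    define \<kappa> where "\<kappa> = (a * d - b * c) / ((c * F x + d) * (c * F y + d))"
    have "0 < \<kappa>"
      unfolding \<kappa>_def using det same_sign[OF x y] by simp
    have G: "G q = (a * F q + b) / (c * F q + d)" if "is_policy q" for q
      using rel[OF that] nonzero[OF that] by (simp add: field_simps)
    have "G x - G y = ((a * F x + b) * (c * F y + d) - (a * F y + b) * (c * F x + d))
        / ((c * F x + d) * (c * F y + d))"
      unfolding G[OF x] G[OF y] using nonzero[OF x] nonzero[OF y] by (rule diff_frac_eq)
    also have "\<dots> = \<kappa> * (F x - F y)"
      unfolding \<kappa>_def by (simp add: algebra_simps)
    finally have "G x - G y = \<kappa> * (F x - F y)" .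
    then have "G y \<le> G x \<longleftrightarrow> \<kappa> * 0 \<le> \<kappa> * (F x - F y)"
      by (metis diff_ge_0_iff_ge mult_zero_right)
    also have "\<dots> \<longleftrightarrow> F y \<le> F x"
      using \<open>0 < \<kappa>\<close> by (simp only: mult_le_cancel_left_pos) simp
    finally show "F y \<le> F x \<longleftrightarrow> G y \<le> G x"
      by simp
  qed
qed

lemma bilinear_relation_degenerate:
  fixes F G :: "('s::finite \<Rightarrow> 'a::finite \<Rightarrow> real) \<Rightarrow> real"
  assumes F: "linear_fractional_on_segments F" and G: "lipschitz_policies G"
    and rel: "\<And>q. is_policy q \<Longrightarrow> (c * F q + d) * G q = a * F q + b"
    and det: "a * d - b * c = 0" and p: "is_policy p" "c * F p + d \<noteq> 0"
    and q: "is_policy q"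
  shows "G q = G p"
proof (rule ccontr)
  assume "G q \<noteq> G p"
  \<comment> \<open>A vanishing determinant makes \<open>(a, b)\<close> proportional to \<open>(c, d)\<close>, so the relation factors.\<close>
  have "G p * c * (c * F p + d) = c * ((c * F p + d) * G p)"
    by (simp add: algebra_simps)
  also have "\<dots> = a * (c * F p + d)"
    using rel[OF p(1)] det by (simp add: algebra_simps)
  finally have a: "a = G p * c"
    using p(2) by simp
  have "G p * d * (c * F p + d) = d * ((c * F p + d) * G p)"
    by (simp add: algebra_simps)
  also have "\<dots> = b * (c * F p + d)"
    using rel[OF p(1)] det by (simp add: algebra_simps)
  finally have b: "b = G p * d"
    using p(2) by simp
  have factor: "(c * F q' + d) * (G q' - G p) = 0" if "is_policy q'" for q'
    using rel[OF that] unfolding a b by (simp add: algebra_simps)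
  have "0 < \<bar>G q - G p\<bar>"
    using \<open>G q \<noteq> G p\<close> by simp
  then obtain r where r: "0 < r" "\<And>q'. is_policy q' \<Longrightarrow> near q r q' \<Longrightarrow> \<bar>G q' - G q\<bar> < \<bar>G q - G p\<bar>"
    using lipschitz_policies_near[OF G q] by blast
  have "(c * F q' + d) * (\<lambda>_. 1) q' = 0 * F q' + 0" if "is_policy q'" "near q r q'" for q'
    using factor[OF that(1)] r(2)[OF that] by auto
  then have "(c * F p + d) * (\<lambda>_. 1) p = 0 * F p + 0"
    by (rule bilinear_relation_propagates[OF F linear_fractional_on_segments_const q r(1) _ p(1)])
  with p(2) show False by simp
qed

lemma exists_row_change_in_ball:
  fixes F :: "('s::finite \<Rightarrow> 'a::finite \<Rightarrow> real) \<Rightarrow> real"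
  assumes F: "linear_fractional_on_segments F" and w: "is_policy w" and \<rho>: "0 < \<rho>"
    and q0: "is_policy q0" "F q0 \<noteq> F w"
  obtains p s e where "is_policy p" "is_dist e" "near w \<rho> p" "near w \<rho> (p(s := e))" "F (p(s := e)) \<noteq> F p"
proof -
  obtain q where "is_policy q" "near w \<rho> q" "F q \<noteq> F w"
    using constant_propagates[OF F w \<rho>, of "F w" q0] q0 by blast
  then have "\<not> (\<forall>p s e. is_policy p \<longrightarrow> is_dist e \<longrightarrow> near w \<rho> p \<longrightarrow> near w \<rho> (p(s := e))
      \<longrightarrow> F (p(s := e)) = F p)"
    using constant_on_ball_if_row_invariant[of w \<rho> F q] w by blast
  then show ?thesis
    using that by blast
qed

definition contains_policy_ball :: "('s::finite \<Rightarrow> 'a::finite \<Rightarrow> real) set \<Rightarrow> bool" where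
  "contains_policy_ball P \<longleftrightarrow> (\<exists>w \<rho>. is_policy w \<and> 0 < \<rho> \<and> (\<forall>q. is_policy q \<longrightarrow> near w \<rho> q \<longrightarrow> q \<in> P))"

lemma order_compatible_bilinear_relation:
  fixes F G :: "('s::finite \<Rightarrow> 'a::finite \<Rightarrow> real) \<Rightarrow> real"
  assumes F: "linear_fractional_on_segments F" "lipschitz_policies F"
    and G: "linear_fractional_on_segments G"
    and P: "P \<subseteq> policies" "contains_policy_ball P" and nontrivial: "\<not> trivial_on F P"
    and compatible: "\<And>q q'. q \<in> P \<Longrightarrow> q' \<in> P \<Longrightarrow> F q' < F q \<Longrightarrow> G q' \<le> G q"
  obtains p c d a b where "is_policy p" "c * F p + d \<noteq> 0" "0 \<le> a * d - b * c"
    "\<And>q. is_policy q \<Longrightarrow> (c * F q + d) * G q = a * F q + b"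
proof -
  obtain w \<rho> where w: "is_policy w" and \<rho>: "0 < \<rho>" and ball: "\<And>q. is_policy q \<Longrightarrow> near w \<rho> q \<Longrightarrow> q \<in> P"
    using P(2) unfolding contains_policy_ball_def by blast
  obtain x y where "x \<in> P" "y \<in> P" "F x \<noteq> F y"
    using nontrivial unfolding trivial_on_def by blast
  then obtain q0 where "q0 \<in> P" "F q0 \<noteq> F w"
    by (cases "F x = F w") auto
  then have "is_policy q0" "F q0 \<noteq> F w"
    using P(1) unfolding policies_def by auto
  then obtain p s e where p: "is_policy p" "is_dist e" "near w \<rho> p" "near w \<rho> (p(s := e))"
    and moves: "F (p(s := e)) \<noteq> F p"
    by (rule exists_row_change_in_ball[OF F(1) w \<rho>])
  have segment: "mix_at p s e t \<in> P" if "t \<in> {0..1}" for t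
  proof (rule ball)
    show "is_policy (mix_at p s e t)"
      using p that by (intro is_policy_mix_at) auto
    show "near w \<rho> (mix_at p s e t)"
      unfolding mix_at_eq_mix using p that by (intro near_mix) auto
  qed
  obtain r0 where r0: "0 < r0" "\<And>q. near (mix_at p s e (1/2)) r0 q \<Longrightarrow> near w \<rho> q"
    using near_shrink[of w \<rho> "mix_at p s e (1/2)"] p near_mix[of w \<rho> p "p(s := e)" "1/2"]
    unfolding mix_at_eq_mix by auto
  obtain m r c d a b where "is_policy m" "0 < r"
    and local: "\<And>q. is_policy q \<Longrightarrow> near m r q \<Longrightarrow> (c * F q + d) * G q = a * F q + b"
    and "0 \<le> a * d - b * c" "c * F p + d \<noteq> 0"
    using local_bilinear_relation[OF F G p(1,2) moves segment r0(1) ball[OF _ r0(2)] compatible] by blast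
  moreover have "(c * F q + d) * G q = a * F q + b" if "is_policy q" for q
    using bilinear_relation_propagates[OF F(1) G \<open>is_policy m\<close> \<open>0 < r\<close> local that] .
  ultimately show ?thesis
    using that p(1) by blast
qed

theorem exploitable_if_linear_fractional:
  fixes F G :: "('s::finite \<Rightarrow> 'a::finite \<Rightarrow> real) \<Rightarrow> real"
  assumes F: "linear_fractional_on_segments F" "lipschitz_policies F"
    and G: "linear_fractional_on_segments G" "lipschitz_policies G"
    and P: "P \<subseteq> policies" "contains_policy_ball P"
    and nontrivial: "\<not> trivial_on F P" "\<not> trivial_on G P" and not_equivalent: "\<not> equivalent_on F G P"
  shows "\<exists>p\<in>P. \<exists>q\<in>P. F p > F q \<and> G q > G p"
proof (rule ccontr)
  assume "\<not> ?thesis"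
  then have "\<And>q q'. q \<in> P \<Longrightarrow> q' \<in> P \<Longrightarrow> F q' < F q \<Longrightarrow> G q' \<le> G q"
    by (meson not_le)
  then obtain p c d a b where p: "is_policy p" and nondegenerate: "c * F p + d \<noteq> 0"
    and det: "0 \<le> a * d - b * c" and rel: "\<And>q. is_policy q \<Longrightarrow> (c * F q + d) * G q = a * F q + b"
    using order_compatible_bilinear_relation[OF F G(1) P nontrivial(1)] by blast
  show False
  proof (cases "a * d - b * c = 0")
    case True
    have "G q = G p" if "is_policy q" for q
      using bilinear_relation_degenerate[OF F(1) G(2) _ True p nondegenerate that] rel by blast
    then have "trivial_on G P"
      using P(1) unfolding trivial_on_def policies_def by (auto simp: subset_iff)
    with nontrivial(2) show False ..
  next
    case False
    then show False
      using bilinear_relation_equivalent[OF F(2) rel _ P(1)] det not_equivalent by simp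
  qed
qed

section \<open>The three policy classes\<close>

lemma contains_policy_ball_policies: "contains_policy_ball (policies :: ('s::finite \<Rightarrow> 'a::finite \<Rightarrow> real) set)"
  unfolding contains_policy_ball_def policies_def using is_policy_deterministic zero_less_one by blast

lemma contains_policy_ball_eps_suboptimal:
  fixes d0 :: "'s::finite \<Rightarrow> real" and R :: "'s \<Rightarrow> 'a::finite \<Rightarrow> real"
  assumes \<epsilon>: "0 < \<epsilon>" and T0: "is_transition T0" and \<gamma>: "0 \<le> \<gamma>" "\<gamma> < 1"
  shows "contains_policy_ball (eps_suboptimal d0 R \<gamma> T0 \<epsilon>)"
proof -
  let ?J = "J d0 R \<gamma> T0" and ?S = "SUP q\<in>policies. J d0 R \<gamma> T0 q"
  have lip: "lipschitz_policies ?J"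
    by (rule lipschitz_policies_J[OF T0 \<gamma>])
  have "(policies :: ('s \<Rightarrow> 'a \<Rightarrow> real) set) \<noteq> {}"
    using is_policy_deterministic unfolding policies_def by blast
  moreover have "?S - \<epsilon> / 2 < ?S"
    using \<epsilon> by simp
  ultimately obtain w where w: "w \<in> policies" "?S - \<epsilon> / 2 < ?J w"
    using less_cSUP_iff[OF _ lipschitz_policies_bdd_above[OF lip]] by blast
  then have "is_policy w"
    unfolding policies_def by simp
  obtain r where r: "0 < r" "\<And>q. is_policy q \<Longrightarrow> near w r q \<Longrightarrow> \<bar>?J q - ?J w\<bar> < \<epsilon> / 2"
    using lipschitz_policies_near[OF lip \<open>is_policy w\<close>, of "\<epsilon> / 2"] \<epsilon> by auto
  show ?thesis
    unfolding contains_policy_ball_def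
  proof (intro exI conjI allI impI)
    fix q assume q: "is_policy q" "near w r q"
    then have "?S - \<epsilon> \<le> ?J q"
      using r(2)[OF q] w(2) unfolding abs_less_iff by linarith
    with q(1) show "q \<in> eps_suboptimal d0 R \<gamma> T0 \<epsilon>"
      unfolding eps_suboptimal_def policies_def by simp
  qed (use \<open>is_policy w\<close> r(1) in auto)
qed

lemma contains_policy_ball_delta_deterministic:
  assumes "\<delta> < 1"
  shows "contains_policy_ball (delta_deterministic \<delta> :: ('s::finite \<Rightarrow> 'a::finite \<Rightarrow> real) set)"
proof -
  let ?w = "\<lambda>(s::'s) (a::'a). if a = undefined then 1 else 0 :: real"
  have "q \<in> delta_deterministic \<delta>" if q: "is_policy q" "near ?w (1 - \<delta>) q" for q
  proof -
    have "\<delta> \<le> (MAX a. q s a)" for s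
    proof -
      have "\<delta> < q s undefined"
        using q(2)[unfolded near_def, rule_format, of s undefined] by auto
      also have "\<dots> \<le> (MAX a. q s a)"
        by (rule Max_ge) auto
      finally show ?thesis by simp
    qed
    with q(1) show ?thesis
      unfolding delta_deterministic_def policies_def by simp
  qed
  then show ?thesis
    unfolding contains_policy_ball_def using is_policy_deterministic assms
    by (intro exI[of _ ?w] exI[of _ "1 - \<delta>"]) auto
qed

theorem mainTheorem12:
  fixes d0 :: "'s::finite \<Rightarrow> real"
    and R :: "'s \<Rightarrow> 'a::finite \<Rightarrow> real"
    and \<gamma> :: real
    and P :: "('s \<Rightarrow> 'a \<Rightarrow> real) set"
    and T T' :: "'s \<Rightarrow> 'a \<Rightarrow> 's \<Rightarrow> real"
  assumes "CARD('a) > 1"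
    and "is_dist d0"
    and "0 \<le> \<gamma>" and "\<gamma> < 1"
    and "P = policies
         \<or> (\<exists>\<epsilon> T0. \<epsilon> > 0 \<and> is_transition T0 \<and> all_reachable d0 T0
                  \<and> P = eps_suboptimal d0 R \<gamma> T0 \<epsilon>)
         \<or> (\<exists>\<delta>. \<delta> < 1 \<and> P = delta_deterministic \<delta>)"
    and "is_transition T" and "all_reachable d0 T"
    and "is_transition T'" and "all_reachable d0 T'"
    and "\<not> trivial_on (J d0 R \<gamma> T) P"
    and "\<not> trivial_on (J d0 R \<gamma> T') P"
    and "\<not> equivalent_on (J d0 R \<gamma> T) (J d0 R \<gamma> T') P"
  shows "exploitable d0 R \<gamma> T T' P"
proof -
  note \<gamma> = assms(3,4)
  have "P \<subseteq> policies \<and> contains_policy_ball P"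
    using assms(5)
  proof (elim disjE exE conjE)
    assume "P = policies"
    then show ?thesis
      using contains_policy_ball_policies by simp
  next
    fix \<epsilon> T0 assume "0 < \<epsilon>" "is_transition T0" "P = eps_suboptimal d0 R \<gamma> T0 \<epsilon>"
    then show ?thesis
      using contains_policy_ball_eps_suboptimal[OF _ _ \<gamma>] unfolding eps_suboptimal_def by auto
  next
    fix \<delta> assume "\<delta> < 1" "P = delta_deterministic \<delta>"
    then show ?thesis
      using contains_policy_ball_delta_deterministic unfolding delta_deterministic_def by auto
  qed
  then show ?thesis
    unfolding exploitable_def
    using exploitable_if_linear_fractional[OF
        linear_fractional_on_segments_J[OF assms(6) \<gamma>] lipschitz_policies_J[OF assms(6) \<gamma>]
        linear_fractional_on_segments_J[OF assms(8) \<gamma>] lipschitz_policies_J[OF assms(8) \<gamma>] _ _ assms(10-12)]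
    by blast
qed

end
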